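(* Let $\mathcal{X}$ be a nonempty convex subset of $\mathbb{R}^n$ and $\mathbf{F}$ a convex interval-valued function on $\mathcal{X}$. Then for every $\bar{x}\in\mathcal{X}$, $\partial\mathbf{F}(\bar{x})$ is closed, i.e., whenever a sequence $\{\widehat{\mathbf{G}}_k\}\subseteq\partial\mathbf{F}(\bar{x})$ converges to $\widehat{\mathbf{G}}\in I(\mathbb{R})^n$, then $\widehat{\mathbf{G}}\in\partial\mathbf{F}(\bar{x})$.
   Context: $I(\mathbb{R})$: nonempty compact intervals $\mathbf{A}=[\underline{a},\overline{a}]$; $\mathbf{A}\oplus\mathbf{B}=[\underline{a}+\underline{b},\overline{a}+\overline{b}]$; $\lambda\odot\mathbf{A}=[\min\{\lambda\underline{a},\lambda\overline{a}\},\max\{\lambda\underline{a},\lambda\overline{a}\}]$; $\mathbf{A}\ominus_{gH}\mathbf{B}=[\min\{\underline{a}-\underline{b},\overline{a}-\overline{b}\},\max\{\underline{a}-\underline{b},\overline{a}-\overline{b}\}]$, applied componentwise on $I(\mathbb{R})^n$; $\mathbf{A}\preceq\mathbf{B}$ iff $\underline{a}\le\underline{b}$ and $\overline{a}\le\overline{b}$; $\|\mathbf{A}\|_{I(\mathbb{R})}=\max\{|\underline{a}|,|\overline{a}|\}$; $\|\widehat{\mathbf{A}}\|_{I(\mathbb{R})^n}=\sqrt{\sum_i\|\mathbf{A}_i\|_{I(\mathbb{R})}^2}$. A sequence $\widehat{\mathbf{G}}_k$ converges to $\widehat{\mathbf{G}}$ if $\|\widehat{\mathbf{G}}_k\ominus_{gH}\widehat{\mathbf{G}}\|_{I(\mathbb{R})^n}\to0$.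 $d^T\odot\widehat{\mathbf{A}}=\bigoplus_i d_i\odot\mathbf{A}_i$. Convex IVF: $\mathbf{F}(\lambda x_1+(1-\lambda)x_2)\preceq\lambda\odot\mathbf{F}(x_1)\oplus(1-\lambda)\odot\mathbf{F}(x_2)$. $gH$-subgradient at $\bar{x}$: $\widehat{\mathbf{G}}\in I(\mathbb{R})^n$ with $(x-\bar{x})^T\odot\widehat{\mathbf{G}}\preceq\mathbf{F}(x)\ominus_{gH}\mathbf{F}(\bar{x})$ for all $x\in\mathcal{X}$; $\partial\mathbf{F}(\bar{x})$ is their set. *)

theory Defs
  imports "HOL-Analysis.Analysis"
begin

text \<open>Compact intervals [a_lo, a_hi] are represented as pairs (a_lo, a_hi) with a_lo <= a_hi.\<close>

type_synonym ival = "real \<times> real"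

definition is_ival :: "ival \<Rightarrow> bool" where
  "is_ival A \<longleftrightarrow> fst A \<le> snd A"

definition iadd :: "ival \<Rightarrow> ival \<Rightarrow> ival" where
  "iadd A B = (fst A + fst B, snd A + snd B)"

definition iscale :: "real \<Rightarrow> ival \<Rightarrow> ival" where
  "iscale l A = (min (l * fst A) (l * snd A), max (l * fst A) (l * snd A))"

definition igh_minus :: "ival \<Rightarrow> ival \<Rightarrow> ival" where
  "igh_minus A B = (min (fst A - fst B) (snd A - snd B), max (fst A - fst B) (snd A - snd B))"

definition ile :: "ival \<Rightarrow> ival \<Rightarrow> bool" where
  "ile A B \<longleftrightarrow> fst A \<le> fst B \<and> snd A \<le> snd B"

definition inorm :: "ival \<Rightarrow> real" where
  "inorm A = max \<bar>fst A\<bar> \<bar>snd A\<bar>"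

definition ivec_norm :: "('n::finite \<Rightarrow> ival) \<Rightarrow> real" where
  "ivec_norm G = sqrt (\<Sum>i\<in>UNIV. (inorm (G i))\<^sup>2)"

definition ivec_gh_minus :: "('n \<Rightarrow> ival) \<Rightarrow> ('n \<Rightarrow> ival) \<Rightarrow> ('n \<Rightarrow> ival)" where
  "ivec_gh_minus G H = (\<lambda>i. igh_minus (G i) (H i))"

definition ivec_valid :: "('n \<Rightarrow> ival) \<Rightarrow> bool" where
  "ivec_valid G \<longleftrightarrow> (\<forall>i. is_ival (G i))"

definition idot :: "real ^ 'n::finite \<Rightarrow> ('n \<Rightarrow> ival) \<Rightarrow> ival" where
  "idot d G = ((\<Sum>i\<in>UNIV. fst (iscale (d $ i) (G i))), (\<Sum>i\<in>UNIV. snd (iscale (d $ i) (G i))))"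

definition convex_ivf :: "(real ^ 'n) set \<Rightarrow> (real ^ 'n \<Rightarrow> ival) \<Rightarrow> bool" where
  "convex_ivf X F \<longleftrightarrow> (\<forall>x\<in>X. is_ival (F x)) \<and>
     (\<forall>x1\<in>X. \<forall>x2\<in>X. \<forall>l::real. 0 \<le> l \<and> l \<le> 1 \<longrightarrow>
        ile (F (l *\<^sub>R x1 + (1 - l) *\<^sub>R x2)) (iadd (iscale l (F x1)) (iscale (1 - l) (F x2))))"

definition gH_subgradient :: "(real ^ 'n::finite) set \<Rightarrow> (real ^ 'n \<Rightarrow> ival) \<Rightarrow> real ^ 'n \<Rightarrow> ('n \<Rightarrow> ival) \<Rightarrow> bool" where
  "gH_subgradient X F xb G \<longleftrightarrow> ivec_valid G \<and>
     (\<forall>x\<in>X. ile (idot (x - xb) G) (igh_minus (F x) (F xb)))"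

definition gH_subdiff :: "(real ^ 'n::finite) set \<Rightarrow> (real ^ 'n \<Rightarrow> ival) \<Rightarrow> real ^ 'n \<Rightarrow> ('n \<Rightarrow> ival) set" where
  "gH_subdiff X F xb = {G. gH_subgradient X F xb G}"


end

theory Submission
  imports Defs
begin

text \<open>Both sides of the subgradient inequality depend continuously on the endpoints of the
  candidate subgradient, and the order on intervals is a pair of non-strict inequalities
  between endpoints, so it survives limits.\<close>

lemma inorm_le_ivec_norm: "inorm (H i) \<le> ivec_norm (H :: 'n::finite \<Rightarrow> ival)"
proof -
  have "(inorm (H i))\<^sup>2 \<le> (\<Sum>j\<in>UNIV. (inorm (H j))\<^sup>2)"
    by (rule member_le_sum) auto
  then have "sqrt ((inorm (H i))\<^sup>2) \<le> ivec_norm H"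
    unfolding ivec_norm_def by (rule real_sqrt_le_mono)
  moreover have "0 \<le> inorm (H i)"
    unfolding inorm_def by simp
  ultimately show ?thesis
    by simp
qed

lemma inorm_igh_minus:
  "inorm (igh_minus A B) = max \<bar>fst A - fst B\<bar> \<bar>snd A - snd B\<bar>"
  unfolding inorm_def igh_minus_def by (auto simp: min_def max_def)

lemma tendsto_of_ivec_norm_gh_minus:
  fixes Gs :: "'a \<Rightarrow> 'n::finite \<Rightarrow> ival"
  assumes "((\<lambda>k. ivec_norm (ivec_gh_minus (Gs k) G)) \<longlongrightarrow> 0) net"
  shows "((\<lambda>k. Gs k i) \<longlongrightarrow> G i) net"
proof -
  have bound: "\<bar>fst (Gs k i) - fst (G i)\<bar> \<le> ivec_norm (ivec_gh_minus (Gs k) G)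
      \<and> \<bar>snd (Gs k i) - snd (G i)\<bar> \<le> ivec_norm (ivec_gh_minus (Gs k) G)" for k
    using inorm_le_ivec_norm[of "ivec_gh_minus (Gs k) G" i]
    by (simp add: ivec_gh_minus_def inorm_igh_minus)
  have "((\<lambda>k. fst (Gs k i) - fst (G i)) \<longlongrightarrow> 0) net"
    by (rule Lim_null_comparison[OF _ assms]) (use bound in auto)
  then have fst: "((\<lambda>k. fst (Gs k i)) \<longlongrightarrow> fst (G i)) net"
    by (simp add: LIM_zero_iff)
  have "((\<lambda>k. snd (Gs k i) - snd (G i)) \<longlongrightarrow> 0) net"
    by (rule Lim_null_comparison[OF _ assms]) (use bound in auto)
  then have snd: "((\<lambda>k. snd (Gs k i)) \<longlongrightarrow> snd (G i)) net"
    by (simp add: LIM_zero_iff)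
  from tendsto_Pair[OF fst snd] show ?thesis
    by simp
qed

lemma tendsto_idot:
  fixes Gs :: "'a \<Rightarrow> 'n::finite \<Rightarrow> ival"
  assumes "\<And>i. ((\<lambda>k. Gs k i) \<longlongrightarrow> G i) net"
  shows "((\<lambda>k. idot d (Gs k)) \<longlongrightarrow> idot d G) net"
proof -
  have fst: "((\<lambda>k. fst (Gs k i)) \<longlongrightarrow> fst (G i)) net"
    and snd: "((\<lambda>k. snd (Gs k i)) \<longlongrightarrow> snd (G i)) net" for i
    using tendsto_fst[OF assms] tendsto_snd[OF assms] by auto
  show ?thesis
    unfolding idot_def iscale_def fst_conv snd_conv
    by (intro tendsto_Pair tendsto_sum tendsto_min tendsto_max tendsto_mult tendsto_const fst snd)
qed

lemma ile_tendsto: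
  assumes "net \<noteq> bot" and "(f \<longlongrightarrow> A) net" and "(g \<longlongrightarrow> B) net"
    and "eventually (\<lambda>k. ile (f k) (g k)) net"
  shows "ile A B"
proof -
  have "fst A \<le> fst B"
    by (rule tendsto_le[OF assms(1) tendsto_fst[OF assms(3)] tendsto_fst[OF assms(2)]])
      (use assms(4) in \<open>auto simp: ile_def elim: eventually_mono\<close>)
  moreover have "snd A \<le> snd B"
    by (rule tendsto_le[OF assms(1) tendsto_snd[OF assms(3)] tendsto_snd[OF assms(2)]])
      (use assms(4) in \<open>auto simp: ile_def elim: eventually_mono\<close>)
  ultimately show ?thesis
    by (simp add: ile_def)
qed

lemma is_ival_tendsto:
  assumes "net \<noteq> bot" and "(f \<longlongrightarrow> A) net" and "eventually (\<lambda>k. is_ival (f k)) net"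
  shows "is_ival A"
  using tendsto_le[OF assms(1) tendsto_snd[OF assms(2)] tendsto_fst[OF assms(2)]] assms(3)
  by (auto simp: is_ival_def elim: eventually_mono)

lemma gH_subgradient_tendsto:
  fixes Gs :: "'a \<Rightarrow> 'n::finite \<Rightarrow> ival"
  assumes "net \<noteq> bot" and "eventually (\<lambda>k. gH_subgradient X F xb (Gs k)) net"
    and "\<And>i. ((\<lambda>k. Gs k i) \<longlongrightarrow> G i) net"
  shows "gH_subgradient X F xb G"
proof -
  have "is_ival (G i)" for i
    by (rule is_ival_tendsto[OF assms(1,3)])
      (use assms(2) in \<open>auto simp: gH_subgradient_def ivec_valid_def elim: eventually_mono\<close>)
  moreover have "ile (idot (x - xb) G) (igh_minus (F x) (F xb))" if "x \<in> X" for x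
    by (rule ile_tendsto[OF assms(1) tendsto_idot[OF assms(3)] tendsto_const])
      (use assms(2) \<open>x \<in> X\<close> in \<open>auto simp: gH_subgradient_def elim: eventually_mono\<close>)
  ultimately show ?thesis
    by (simp add: gH_subgradient_def ivec_valid_def)
qed

theorem mainTheorem11:
  fixes X :: "(real ^ 'n) set" and F :: "real ^ 'n \<Rightarrow> ival"
    and xb :: "real ^ 'n" and Gs :: "nat \<Rightarrow> ('n \<Rightarrow> ival)" and G :: "'n \<Rightarrow> ival"
  assumes "X \<noteq> {}" and "convex X" and "convex_ivf X F" and "xb \<in> X"
    and "\<And>k. Gs k \<in> gH_subdiff X F xb"
    and "ivec_valid G"
    and "(\<lambda>k. ivec_norm (ivec_gh_minus (Gs k) G)) \<longlonglongrightarrow> 0"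
  shows "G \<in> gH_subdiff X F xb"
proof -
  have "gH_subgradient X F xb G"
  proof (rule gH_subgradient_tendsto[OF trivial_limit_sequentially])
    show "\<forall>\<^sub>F k in sequentially. gH_subgradient X F xb (Gs k)"
      using assms(5) by (simp add: gH_subdiff_def)
    show "(\<lambda>k. Gs k i) \<longlonglongrightarrow> G i" for i
      by (rule tendsto_of_ivec_norm_gh_minus[OF assms(7)])
  qed
  then show ?thesis
    by (simp add: gH_subdiff_def)
qed

end
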